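(* Let $V$ be a finite-dimensional real representation of $\mathbb Z/3$, and write $V\cong m\mathbf 1\oplus n\mathbf 2$. Then $V$ has a basis that is $\mathbb Z/3$-invariant up to sign if and only if $m\ge n$.
   Context: $\mathbf 1$ denotes the trivial one-dimensional real representation of $\mathbb Z/3$ and $\mathbf 2$ the two-dimensional real representation in which a generator acts by rotation by $120^\circ$; every finite-dimensional real $\mathbb Z/3$-representation is isomorphic to $m\mathbf 1\oplus n\mathbf 2$ for unique $m,n\ge0$. A basis is $G$-invariant up to sign if every $g\in G$ maps every basis element to plus or minus a basis element. *)

theory Defs
  imports Complex_Main "Jordan_Normal_Form.Matrix"
begin

text \<open>A finite-dimensional real representation of Z/3 on R^d is given by the
 matrix A of the action of the generator (so A^3 = 1). The generator g^k acts by A^k.\<close>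

definition rot120 :: "nat \<Rightarrow> nat \<Rightarrow> real" where
  "rot120 i j = (if i = j then - 1/2 else if i = 1 \<and> j = 0 then sqrt 3 / 2 else - sqrt 3 / 2)"

text \<open>Standard matrix of m1 \<oplus> n2: block diagonal, m ones followed by n rotation blocks.\<close>
definition std_rep :: "nat \<Rightarrow> nat \<Rightarrow> real mat" where
  "std_rep m n = mat (m + 2*n) (m + 2*n) (\<lambda>(i,j).
     if i < m \<or> j < m then (if i = j then 1 else 0)
     else if (i - m) div 2 = (j - m) div 2 then rot120 ((i - m) mod 2) ((j - m) mod 2)
     else 0)"

definition is_basis_list :: "nat \<Rightarrow> real vec list \<Rightarrow> bool" where
  "is_basis_list d bs = (\<exists>P \<in> carrier_mat d d. invertible_mat P \<and> bs = cols P)"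

definition invariant_up_to_sign :: "real mat \<Rightarrow> real vec list \<Rightarrow> bool" where
  "invariant_up_to_sign A bs =
     (\<forall>k::nat. \<forall>b \<in> set bs. \<exists>c \<in> set bs. (A ^\<^sub>m k) *\<^sub>v b = c \<or> (A ^\<^sub>m k) *\<^sub>v b = - c)"

end

theory Submission
  imports Defs "Jordan_Normal_Form.Determinant"
begin

text \<open>Similar matrices have equal traces, and the trace of \<open>std_rep m n\<close> is \<open>m - n\<close>.
If \<open>A\<close> maps a basis to itself up to sign, its matrix in that basis is a signed permutation
matrix, and a diagonal entry \<open>-1\<close> would give \<open>A b = -b\<close>, impossible for \<open>b \<noteq> 0\<close> since
\<open>A\<close> has odd order. So the trace is the number of fixed basis vectors, whence \<open>m \<ge> n\<close>.
Conversely, if \<open>m \<ge> n\<close>, pair the \<open>j\<close>-th trivial summand (spanned by \<open>e\<^sub>j\<close>) with the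
\<open>j\<close>-th rotation block (containing \<open>u\<^sub>j\<close>) for \<open>j < n\<close>: the three vectors \<open>e\<^sub>j + R\<^sup>k u\<^sub>j\<close>
are permuted cyclically by the rotation \<open>R\<close> and span the three-dimensional sum. Together
with the remaining \<open>m - n\<close> trivial vectors they form a basis permuted by \<open>std_rep m n\<close>,
and conjugation carries it to a basis for \<open>A\<close>.\<close>

lemma invertible_mat_iff_left_inverse:
  fixes A :: "'a :: field mat"
  assumes A: "A \<in> carrier_mat n n"
  shows "invertible_mat A \<longleftrightarrow> (\<exists>B \<in> carrier_mat n n. B * A = 1\<^sub>m n)"
proof
  assume "invertible_mat A"
  then obtain B where AB: "A * B = 1\<^sub>m n" and BA: "B * A = 1\<^sub>m (dim_row B)"
    using A unfolding invertible_mat_def inverts_mat_def by auto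
  have "B \<in> carrier_mat n n"
    using arg_cong[OF AB, of dim_col] arg_cong[OF BA, of dim_col] A by auto
  with BA show "\<exists>B \<in> carrier_mat n n. B * A = 1\<^sub>m n" by auto
next
  assume "\<exists>B \<in> carrier_mat n n. B * A = 1\<^sub>m n"
  then obtain B where B: "B \<in> carrier_mat n n" and BA: "B * A = 1\<^sub>m n" by blast
  have "A * B = 1\<^sub>m n" by (rule mat_mult_left_right_inverse[OF B A BA])
  with A B BA show "invertible_mat A"
    unfolding invertible_mat_def inverts_mat_def by auto
qed

lemma mult_mat_vec_uminus:
  fixes A :: "'a :: ring mat"
  assumes "A \<in> carrier_mat nr nc" "v \<in> carrier_vec nc"
  shows "A *\<^sub>v (- v) = - (A *\<^sub>v v)"
  using assms by (intro eq_vecI) (auto simp: scalar_prod_uminus_right)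

lemma mult_mat_vec_unit:
  fixes A :: "'a :: semiring_1 mat"
  assumes "A \<in> carrier_mat nr nc" "i < nc"
  shows "A *\<^sub>v unit_vec nc i = col A i"
  using assms by (intro eq_vecI) (auto simp: scalar_prod_right_unit)

lemma col_mem_cols: "i < dim_col A \<Longrightarrow> col A i \<in> set (cols A)"
  by (metis cols_length cols_nth nth_mem)

lemma mem_cols_iff: "b \<in> set (cols A) \<longleftrightarrow> (\<exists>i < dim_col A. b = col A i)"
  by (auto simp: in_set_conv_nth)

lemma invariant_up_to_sign_iff:
  fixes A :: "real mat"
  assumes A: "A \<in> carrier_mat d d" and bs: "set bs \<subseteq> carrier_vec d"
  shows "invariant_up_to_sign A bs \<longleftrightarrow>
    (\<forall>b \<in> set bs. \<exists>c \<in> set bs. A *\<^sub>v b = c \<or> A *\<^sub>v b = - c)"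
proof
  assume "invariant_up_to_sign A bs"
  then have "\<forall>b \<in> set bs. \<exists>c \<in> set bs. (A ^\<^sub>m 1) *\<^sub>v b = c \<or> (A ^\<^sub>m 1) *\<^sub>v b = - c"
    unfolding invariant_up_to_sign_def by blast
  with A show "\<forall>b \<in> set bs. \<exists>c \<in> set bs. A *\<^sub>v b = c \<or> A *\<^sub>v b = - c" by simp
next
  assume step: "\<forall>b \<in> set bs. \<exists>c \<in> set bs. A *\<^sub>v b = c \<or> A *\<^sub>v b = - c"
  have "\<exists>c \<in> set bs. (A ^\<^sub>m k) *\<^sub>v b = c \<or> (A ^\<^sub>m k) *\<^sub>v b = - c" if "b \<in> set bs" for k b
    using that
  proof (induction k arbitrary: b)
    case 0
    then have "b \<in> carrier_vec d" using bs by blast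
    then show ?case using 0 A by auto
  next
    case (Suc k)
    from step Suc.prems obtain c where c: "c \<in> set bs" "A *\<^sub>v b = c \<or> A *\<^sub>v b = - c" by blast
    from Suc.IH[OF c(1)] obtain c' where
      c': "c' \<in> set bs" "(A ^\<^sub>m k) *\<^sub>v c = c' \<or> (A ^\<^sub>m k) *\<^sub>v c = - c'" by blast
    have car: "b \<in> carrier_vec d" "c \<in> carrier_vec d" "c' \<in> carrier_vec d"
      using Suc.prems c(1) c'(1) bs by auto
    have "(A ^\<^sub>m Suc k) *\<^sub>v b = (A ^\<^sub>m k) *\<^sub>v (A *\<^sub>v b)"
      using A car by (simp add: assoc_mult_mat_vec[of _ d d])
    then show ?case using c c' car A mult_mat_vec_uminus[of "A ^\<^sub>m k" d d] by auto
  qed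
  then show "invariant_up_to_sign A bs" unfolding invariant_up_to_sign_def by blast
qed

definition trace :: "'a :: comm_ring_1 mat \<Rightarrow> 'a" where
  "trace A = (\<Sum>i < dim_row A. A $$ (i, i))"

lemma trace_mult_comm:
  fixes A :: "'a :: comm_ring_1 mat"
  assumes "A \<in> carrier_mat n k" "B \<in> carrier_mat k n"
  shows "trace (A * B) = trace (B * A)"
proof -
  have "trace (A * B) = (\<Sum>i < n. \<Sum>j < k. A $$ (i, j) * B $$ (j, i))"
    using assms unfolding trace_def by (simp add: scalar_prod_def lessThan_atLeast0)
  also have "\<dots> = (\<Sum>j < k. \<Sum>i < n. B $$ (j, i) * A $$ (i, j))"
    by (subst sum.swap) (simp add: mult.commute)
  also have "\<dots> = trace (B * A)"
    using assms unfolding trace_def by (simp add: scalar_prod_def lessThan_atLeast0)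
  finally show ?thesis .
qed

lemma similar_mat_trace:
  fixes A :: "'a :: comm_ring_1 mat"
  assumes "similar_mat A B"
  shows "trace A = trace B"
proof -
  from similar_matD[OF assms] obtain n P Q where car: "{A, B, P, Q} \<subseteq> carrier_mat n n"
    and QP: "Q * P = 1\<^sub>m n" and APBQ: "A = P * B * Q" by blast
  have "trace A = trace (Q * (P * B))"
    unfolding APBQ by (rule trace_mult_comm) (use car in auto)
  also have "Q * (P * B) = B"
    using car by (auto simp: assoc_mult_mat[symmetric, of Q n n P n B n] QP)
  finally show ?thesis .
qed

lemma flipped_vec_zero_if_odd_order:
  fixes A :: "real mat"
  assumes A: "A \<in> carrier_mat d d" and AN: "A ^\<^sub>m N = 1\<^sub>m d" and "odd N"
    and v: "v \<in> carrier_vec d" and Av: "A *\<^sub>v v = - v"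
  shows "v = 0\<^sub>v d"
proof -
  have pow: "(A ^\<^sub>m k) *\<^sub>v v = (if even k then v else - v)" for k
  proof (induction k)
    case (Suc k)
    have "(A ^\<^sub>m Suc k) *\<^sub>v v = (A ^\<^sub>m k) *\<^sub>v (- v)"
      using A v Av by (simp add: assoc_mult_mat_vec[of _ d d])
    then show ?case using Suc mult_mat_vec_uminus[of "A ^\<^sub>m k" d d v] A v by auto
  qed (use A v in auto)
  from pow[of N] have "v = - v" using AN v \<open>odd N\<close> by simp
  then have flip: "v $ i = (- v) $ i" for i by metis
  show ?thesis
  proof (rule eq_vecI)
    fix i assume "i < dim_vec (0\<^sub>v d :: real vec)"
    then have "(- v) $ i = - (v $ i)" using v by simp
    then show "v $ i = 0\<^sub>v d $ i" using flip[of i] \<open>i < dim_vec (0\<^sub>v d)\<close> by simp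
  qed (use v in simp)
qed

lemma conj_diag_nonneg_if_invariant_up_to_sign:
  fixes A :: "real mat"
  assumes A: "A \<in> carrier_mat d d" and AN: "A ^\<^sub>m N = 1\<^sub>m d" and "odd N"
    and B: "B \<in> carrier_mat d d" and Bi: "Bi \<in> carrier_mat d d" and BiB: "Bi * B = 1\<^sub>m d"
    and inv: "invariant_up_to_sign A (cols B)" and i: "i < d"
  shows "(Bi * A * B) $$ (i, i) \<ge> 0"
proof -
  have Bi_col: "Bi *\<^sub>v col B j = unit_vec d j" if "j < d" for j
  proof -
    have "Bi *\<^sub>v col B j = col (Bi * B) j" by (rule col_mult2[symmetric]) (use Bi B that in auto)
    then show ?thesis using BiB that by simp
  qed
  have "(Bi * A * B) $$ (i, i) = col (Bi * A * B) i $ i"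
    using A B Bi i by simp
  also have "col (Bi * A * B) i = (Bi * A) *\<^sub>v col B i"
    by (rule col_mult2) (use A B Bi i in auto)
  also have "\<dots> = Bi *\<^sub>v (A *\<^sub>v col B i)"
    by (rule assoc_mult_mat_vec) (use A B Bi i in auto)
  finally have entry: "(Bi * A * B) $$ (i, i) = (Bi *\<^sub>v (A *\<^sub>v col B i)) $ i" .
  have "col B i \<in> set (cols B)" using B i by (auto simp: mem_cols_iff)
  with inv obtain c where c: "c \<in> set (cols B)" "A *\<^sub>v col B i = c \<or> A *\<^sub>v col B i = - c"
    using invariant_up_to_sign_iff[OF A] B by fastforce
  then obtain j where j: "j < d" "c = col B j" using B by (auto simp: mem_cols_iff)
  from c(2) show ?thesis
  proof
    assume "A *\<^sub>v col B i = c"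
    then show ?thesis using entry Bi_col j i by simp
  next
    assume flip: "A *\<^sub>v col B i = - c"
    have "j \<noteq> i"
    proof
      assume "j = i"
      then have "col B i = 0\<^sub>v d"
        using flipped_vec_zero_if_odd_order[OF A AN \<open>odd N\<close>] flip j B i by simp
      then have "unit_vec d i $ i = (Bi *\<^sub>v 0\<^sub>v d) $ i" using Bi_col[OF i] by simp
      also have "\<dots> = 0" using Bi i by simp
      finally show False using i by simp
    qed
    then show ?thesis
      using entry flip j i Bi_col mult_mat_vec_uminus[OF Bi, of "col B j"] B by simp
  qed
qed

lemma trace_nonneg_if_invariant_up_to_sign:
  fixes A :: "real mat"
  assumes A: "A \<in> carrier_mat d d" and AN: "A ^\<^sub>m N = 1\<^sub>m d" and "odd N"
    and basis: "is_basis_list d bs" and inv: "invariant_up_to_sign A bs"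
  shows "trace A \<ge> 0"
proof -
  from basis obtain B where B: "B \<in> carrier_mat d d" "invertible_mat B" and bs: "bs = cols B"
    unfolding is_basis_list_def by blast
  from B obtain Bi where Bi: "Bi \<in> carrier_mat d d" and BiB: "Bi * B = 1\<^sub>m d"
    using invertible_mat_iff_left_inverse by blast
  have BBi: "B * Bi = 1\<^sub>m d" by (rule mat_mult_left_right_inverse[OF Bi B(1) BiB])
  have "trace A = trace (B * (Bi * A))"
    using A B Bi by (simp add: assoc_mult_mat[symmetric, of B d d Bi d A d] BBi)
  also have "\<dots> = trace (Bi * A * B)"
    using A B Bi by (simp add: trace_mult_comm[of B d d])
  also have "\<dots> \<ge> 0"
    using conj_diag_nonneg_if_invariant_up_to_sign[OF A AN \<open>odd N\<close> B(1) Bi BiB] inv bs Bi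
    unfolding trace_def by (auto intro: sum_nonneg)
  finally show ?thesis .
qed

lemma invertible_mat_mult:
  fixes A B :: "'a :: field mat"
  assumes A: "A \<in> carrier_mat n n" "invertible_mat A" and B: "B \<in> carrier_mat n n" "invertible_mat B"
  shows "invertible_mat (A * B)"
proof -
  from A B obtain Ai Bi where Ai: "Ai \<in> carrier_mat n n" "Ai * A = 1\<^sub>m n"
    and Bi: "Bi \<in> carrier_mat n n" "Bi * B = 1\<^sub>m n"
    using invertible_mat_iff_left_inverse by meson
  have "(Bi * Ai) * (A * B) = Bi * ((Ai * A) * B)"
    using A B Ai(1) Bi(1) by (simp add: assoc_mult_mat[of _ n n _ n _ n])
  also have "\<dots> = Bi * B" unfolding Ai(2) using B by simp
  finally have "(Bi * Ai) * (A * B) = 1\<^sub>m n" using Bi(2) by simp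
  then show ?thesis
    using invertible_mat_iff_left_inverse[of "A * B" n] A B Ai Bi by auto
qed

lemma invariant_up_to_sign_similar_cols:
  fixes A S P Q C :: "real mat"
  assumes wit: "similar_mat_wit A S P Q" and A: "A \<in> carrier_mat d d"
    and C: "C \<in> carrier_mat d d" and inv: "invariant_up_to_sign S (cols C)"
  shows "invariant_up_to_sign A (cols (P * C))"
proof -
  from similar_mat_witD2[OF A wit] have car: "S \<in> carrier_mat d d" "P \<in> carrier_mat d d"
    "Q \<in> carrier_mat d d" and QP: "Q * P = 1\<^sub>m d" and APSQ: "A = P * S * Q" by auto
  have A_P: "A *\<^sub>v (P *\<^sub>v v) = P *\<^sub>v (S *\<^sub>v v)" if "v \<in> carrier_vec d" for v
  proof -
    have "A *\<^sub>v (P *\<^sub>v v) = P *\<^sub>v (S *\<^sub>v ((Q * P) *\<^sub>v v))"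
      unfolding APSQ using car that by (simp add: assoc_mult_mat_vec[of _ d d _ d])
    then show ?thesis using QP that by simp
  qed
  have PC: "P * C \<in> carrier_mat d d" using car C by simp
  have "\<exists>c \<in> set (cols (P * C)). A *\<^sub>v b = c \<or> A *\<^sub>v b = - c" if b: "b \<in> set (cols (P * C))" for b
  proof -
    obtain i where "i < d" "b = col (P * C) i"
      using b PC mem_cols_iff[of b "P * C"] by (metis carrier_matD(2))
    then have i: "i < d" "b = P *\<^sub>v col C i" using car C by auto
    have "col C i \<in> set (cols C)" using i C by (auto simp: mem_cols_iff)
    with inv obtain c where c: "c \<in> set (cols C)" "S *\<^sub>v col C i = c \<or> S *\<^sub>v col C i = - c"
      using invariant_up_to_sign_iff[OF car(1)] C by fastforce
    then obtain j where j: "j < d" "c = col C j" using C by (auto simp: mem_cols_iff)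
    have col_car: "col C i \<in> carrier_vec d" "c \<in> carrier_vec d" using i j C by auto
    have "A *\<^sub>v b = P *\<^sub>v (S *\<^sub>v col C i)" using A_P[OF col_car(1)] i(2) by simp
    then have "A *\<^sub>v b = P *\<^sub>v c \<or> A *\<^sub>v b = - (P *\<^sub>v c)"
      using c(2) mult_mat_vec_uminus[OF car(2) col_car(2)] by auto
    moreover have "col (P * C) j \<in> set (cols (P * C))"
      by (rule col_mem_cols) (use C j in simp)
    then have "P *\<^sub>v c \<in> set (cols (P * C))" using col_mult2[OF car(2) C j(1)] j(2) by metis
    ultimately show ?thesis by blast
  qed
  moreover have "set (cols (P * C)) \<subseteq> carrier_vec d" using cols_dim[of "P * C"] car by simp
  ultimately show ?thesis using invariant_up_to_sign_iff[OF A] by blast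
qed

lemma similar_mat_basis_up_to_sign:
  fixes A S :: "real mat"
  assumes sim: "similar_mat A S" and S: "S \<in> carrier_mat d d"
    and basis: "is_basis_list d bs" and inv: "invariant_up_to_sign S bs"
  shows "\<exists>bs'. is_basis_list d bs' \<and> invariant_up_to_sign A bs'"
proof -
  from sim obtain P Q where wit: "similar_mat_wit A S P Q" unfolding similar_mat_def by blast
  from similar_mat_witD2[OF S similar_mat_wit_sym[OF wit]] have A: "A \<in> carrier_mat d d"
    and P: "P \<in> carrier_mat d d" "Q \<in> carrier_mat d d" "Q * P = 1\<^sub>m d" by auto
  from basis obtain C where C: "C \<in> carrier_mat d d" "invertible_mat C" and bs: "bs = cols C"
    unfolding is_basis_list_def by blast
  have "invertible_mat P" using invertible_mat_iff_left_inverse[of P d] P by blast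
  then have "invertible_mat (P * C)" using invertible_mat_mult P(1) C by blast
  then have "is_basis_list d (cols (P * C))"
    unfolding is_basis_list_def using P(1) C(1) by (intro bexI[of _ "P * C"]) auto
  moreover have "invariant_up_to_sign A (cols (P * C))"
    using invariant_up_to_sign_similar_cols[OF wit A C(1)] inv bs by simp
  ultimately show ?thesis by blast
qed

lemma std_rep_dim [simp]:
  "dim_row (std_rep m n) = m + 2 * n" "dim_col (std_rep m n) = m + 2 * n"
  unfolding std_rep_def by simp_all

lemma std_rep_carrier [simp]: "std_rep m n \<in> carrier_mat (m + 2 * n) (m + 2 * n)"
  by (simp add: carrier_matI)

lemma trace_std_rep: "trace (std_rep m n) = real m - real n"
proof -
  let ?S = "std_rep m n"
  have "trace ?S = (\<Sum>i < m. ?S $$ (i, i)) + (\<Sum>i \<in> {m..<m + 2 * n}. ?S $$ (i, i))"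
    unfolding trace_def
    using sum.atLeastLessThan_concat[of 0 m "m + 2 * n" "\<lambda>i. ?S $$ (i, i)"]
    by (simp add: lessThan_atLeast0)
  also have "(\<Sum>i < m. ?S $$ (i, i)) = (\<Sum>i < m. 1)"
    by (rule sum.cong) (simp_all add: std_rep_def)
  also have "(\<Sum>i \<in> {m..<m + 2 * n}. ?S $$ (i, i)) = (\<Sum>i \<in> {m..<m + 2 * n}. - 1 / 2)"
    by (rule sum.cong) (simp_all add: std_rep_def rot120_def)
  finally show ?thesis by simp
qed

definition block_vec :: "nat \<Rightarrow> nat \<Rightarrow> nat \<Rightarrow> real \<Rightarrow> real \<Rightarrow> real \<Rightarrow> real vec" where
  "block_vec m n j x y z = x \<cdot>\<^sub>v unit_vec (m + 2 * n) j + y \<cdot>\<^sub>v unit_vec (m + 2 * n) (m + 2 * j)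
     + z \<cdot>\<^sub>v unit_vec (m + 2 * n) (m + 2 * j + 1)"

lemma block_vec_carrier [simp]: "block_vec m n j x y z \<in> carrier_vec (m + 2 * n)"
  unfolding block_vec_def by simp

lemma block_vec_add:
  "block_vec m n j x y z + block_vec m n j x' y' z' = block_vec m n j (x + x') (y + y') (z + z')"
  unfolding block_vec_def by (intro eq_vecI) (simp_all add: algebra_simps)

lemma block_vec_smult: "a \<cdot>\<^sub>v block_vec m n j x y z = block_vec m n j (a * x) (a * y) (a * z)"
  unfolding block_vec_def by (intro eq_vecI) (simp_all add: algebra_simps)

lemma block_vec_unit:
  "block_vec m n j 1 0 0 = unit_vec (m + 2 * n) j"
  "block_vec m n j 0 1 0 = unit_vec (m + 2 * n) (m + 2 * j)"
  "block_vec m n j 0 0 1 = unit_vec (m + 2 * n) (m + 2 * j + 1)"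
  unfolding block_vec_def by (intro eq_vecI; simp)+

lemma mult_block_vec:
  fixes M :: "real mat"
  assumes M: "M \<in> carrier_mat (m + 2 * n) (m + 2 * n)" and "j < n"
  shows "M *\<^sub>v block_vec m n j x y z
    = x \<cdot>\<^sub>v col M j + y \<cdot>\<^sub>v col M (m + 2 * j) + z \<cdot>\<^sub>v col M (m + 2 * j + 1)"
  using assms unfolding block_vec_def
  by (simp add: mult_add_distrib_mat_vec[OF M] mult_mat_vec[OF M] mult_mat_vec_unit[OF M]
      del: One_nat_def add_Suc_right)

lemma col_std_rep_trivial: "c < m \<Longrightarrow> col (std_rep m n) c = unit_vec (m + 2 * n) c"
  by (intro eq_vecI) (auto simp: std_rep_def)

lemma col_std_rep_rotation:
  assumes "j < n"
  shows "col (std_rep m n) (m + 2 * j) = block_vec m n j 0 (- 1 / 2) (sqrt 3 / 2)"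
    and "col (std_rep m n) (m + 2 * j + 1) = block_vec m n j 0 (- sqrt 3 / 2) (- 1 / 2)"
  using assms by (intro eq_vecI; auto simp: std_rep_def rot120_def block_vec_def)+

lemma std_rep_mult_block_vec:
  assumes "j < n" "j < m"
  shows "std_rep m n *\<^sub>v block_vec m n j x y z
    = block_vec m n j x (- y / 2 - sqrt 3 / 2 * z) (sqrt 3 / 2 * y - z / 2)"
  using assms
  by (simp add: mult_block_vec col_std_rep_trivial col_std_rep_rotation block_vec_add block_vec_smult
      flip: block_vec_unit(1) del: One_nat_def add_Suc_right)
    (simp add: mult.commute)

text \<open>For \<open>j < n\<close> the vectors with indices \<open>j\<close>, \<open>m + 2j\<close>, \<open>m + 2j + 1\<close> are
\<open>e\<^sub>j + R\<^sup>k e\<^bsub>m+2j\<^esub>\<close> for \<open>k = 0, 1, 2\<close>, where \<open>R\<close> is the \<open>j\<close>-th rotation block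
of \<open>std_rep m n\<close>; the indices \<open>n \<le> c < m\<close> keep their unit vectors. This is a basis only
when \<open>n \<le> m\<close>.\<close>
definition perm_basis_vec :: "nat \<Rightarrow> nat \<Rightarrow> nat \<Rightarrow> real vec" where
  "perm_basis_vec m n c =
    (if c < n then block_vec m n c 1 1 0
     else if c < m then unit_vec (m + 2 * n) c
     else if even (c - m) then block_vec m n ((c - m) div 2) 1 (- 1 / 2) (sqrt 3 / 2)
     else block_vec m n ((c - m) div 2) 1 (- 1 / 2) (- sqrt 3 / 2))"

definition perm_basis_dual :: "nat \<Rightarrow> nat \<Rightarrow> nat \<Rightarrow> real vec" where
  "perm_basis_dual m n c =
    (if c < n then block_vec m n c (1 / 3) (1 / 3) (1 / 3)
     else if c < m then unit_vec (m + 2 * n) c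
     else if even (c - m) then block_vec m n ((c - m) div 2) (2 / 3) (- 1 / 3) (- 1 / 3)
     else block_vec m n ((c - m) div 2) 0 (1 / sqrt 3) (- 1 / sqrt 3))"

lemma std_rep_index_cases:
  fixes c :: nat
  assumes "c < m + 2 * n"
  obtains "c < n" | "n \<le> c" "c < m" | j where "j < n" "c = m + 2 * j"
    | j where "j < n" "c = m + 2 * j + 1"
proof -
  consider "c < n" | "n \<le> c" "c < m" | "m \<le> c" by linarith
  then show ?thesis
  proof cases
    case 3
    then have "(c - m) div 2 < n" "c = m + 2 * ((c - m) div 2) \<or> c = m + 2 * ((c - m) div 2) + 1"
      using assms by auto
    then show ?thesis using that 3 by blast
  qed (use that in auto)
qed

lemma perm_basis_vec_simps:
  assumes "n \<le> m"
  shows "c < n \<Longrightarrow> perm_basis_vec m n c = block_vec m n c 1 1 0"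
    and "n \<le> c \<Longrightarrow> c < m \<Longrightarrow> perm_basis_vec m n c = unit_vec (m + 2 * n) c"
    and "perm_basis_vec m n (m + 2 * j) = block_vec m n j 1 (- 1 / 2) (sqrt 3 / 2)"
    and "perm_basis_vec m n (m + 2 * j + 1) = block_vec m n j 1 (- 1 / 2) (- sqrt 3 / 2)"
  using assms unfolding perm_basis_vec_def by auto

lemma perm_basis_dual_simps:
  assumes "n \<le> m"
  shows "c < n \<Longrightarrow> perm_basis_dual m n c = block_vec m n c (1 / 3) (1 / 3) (1 / 3)"
    and "n \<le> c \<Longrightarrow> c < m \<Longrightarrow> perm_basis_dual m n c = unit_vec (m + 2 * n) c"
    and "perm_basis_dual m n (m + 2 * j) = block_vec m n j (2 / 3) (- 1 / 3) (- 1 / 3)"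
    and "perm_basis_dual m n (m + 2 * j + 1) = block_vec m n j 0 (1 / sqrt 3) (- 1 / sqrt 3)"
  using assms unfolding perm_basis_dual_def by auto

lemma std_rep_permutes_perm_basis:
  assumes "n \<le> m" "c < m + 2 * n"
  shows "\<exists>c' < m + 2 * n. std_rep m n *\<^sub>v perm_basis_vec m n c = perm_basis_vec m n c'"
  using assms(2)
proof (cases rule: std_rep_index_cases)
  case 1
  then show ?thesis using assms
    by (intro exI[of _ "m + 2 * c"]) (simp add: perm_basis_vec_simps std_rep_mult_block_vec)
next
  case 2
  then show ?thesis using assms
    by (intro exI[of _ c])
      (simp add: perm_basis_vec_simps mult_mat_vec_unit[OF std_rep_carrier] col_std_rep_trivial)
next
  case (3 j)
  then show ?thesis using assms
    by (intro exI[of _ "m + 2 * j + 1"])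
      (simp add: perm_basis_vec_simps std_rep_mult_block_vec del: One_nat_def add_Suc_right)
next
  case (4 j)
  then show ?thesis using assms
    by (intro exI[of _ j])
      (simp add: perm_basis_vec_simps std_rep_mult_block_vec del: One_nat_def add_Suc_right)
qed

definition perm_basis_mat :: "nat \<Rightarrow> nat \<Rightarrow> real mat" where
  "perm_basis_mat m n = mat_of_cols (m + 2 * n) (map (perm_basis_vec m n) [0..<m + 2 * n])"

definition perm_basis_dual_mat :: "nat \<Rightarrow> nat \<Rightarrow> real mat" where
  "perm_basis_dual_mat m n = mat_of_cols (m + 2 * n) (map (perm_basis_dual m n) [0..<m + 2 * n])"

lemma perm_basis_vec_carrier [simp]: "perm_basis_vec m n c \<in> carrier_vec (m + 2 * n)"
  unfolding perm_basis_vec_def by simp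

lemma perm_basis_dual_carrier [simp]: "perm_basis_dual m n c \<in> carrier_vec (m + 2 * n)"
  unfolding perm_basis_dual_def by simp

lemma perm_basis_mat_dim [simp]:
  "dim_row (perm_basis_mat m n) = m + 2 * n" "dim_col (perm_basis_mat m n) = m + 2 * n"
  "dim_row (perm_basis_dual_mat m n) = m + 2 * n" "dim_col (perm_basis_dual_mat m n) = m + 2 * n"
  unfolding perm_basis_mat_def perm_basis_dual_mat_def by simp_all

lemma perm_basis_mat_carrier [simp]:
  "perm_basis_mat m n \<in> carrier_mat (m + 2 * n) (m + 2 * n)"
  "perm_basis_dual_mat m n \<in> carrier_mat (m + 2 * n) (m + 2 * n)"
  by (simp_all add: carrier_matI)

lemma cols_perm_basis_mat: "cols (perm_basis_mat m n) = map (perm_basis_vec m n) [0..<m + 2 * n]"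
  unfolding perm_basis_mat_def by (rule cols_mat_of_cols) auto

lemma col_perm_basis_mat: "c < m + 2 * n \<Longrightarrow> col (perm_basis_mat m n) c = perm_basis_vec m n c"
  unfolding perm_basis_mat_def by simp

lemma col_perm_basis_dual_mat:
  "c < m + 2 * n \<Longrightarrow> col (perm_basis_dual_mat m n) c = perm_basis_dual m n c"
  unfolding perm_basis_dual_mat_def by simp

lemma perm_basis_dual_mult_block_vec:
  assumes "n \<le> m" "j < n"
  shows "perm_basis_dual_mat m n *\<^sub>v block_vec m n j x y z
    = block_vec m n j (x / 3 + 2 * y / 3) (x / 3 - y / 3 + z / sqrt 3) (x / 3 - y / 3 - z / sqrt 3)"
  using assms
  by (simp add: mult_block_vec col_perm_basis_dual_mat perm_basis_dual_simps block_vec_add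
      block_vec_smult del: One_nat_def add_Suc_right)
    (simp add: field_simps)

lemma perm_basis_dual_mult_perm_basis_vec:
  assumes "n \<le> m" "c < m + 2 * n"
  shows "perm_basis_dual_mat m n *\<^sub>v perm_basis_vec m n c = unit_vec (m + 2 * n) c"
  using assms(2)
proof (cases rule: std_rep_index_cases)
  case 1
  then show ?thesis using assms
    by (simp add: perm_basis_vec_simps perm_basis_dual_mult_block_vec flip: block_vec_unit(1))
next
  case 2
  then show ?thesis using assms
    by (simp add: perm_basis_vec_simps perm_basis_dual_simps col_perm_basis_dual_mat
        mult_mat_vec_unit[OF perm_basis_mat_carrier(2)])
next
  case (3 j)
  then show ?thesis using assms
    by (simp add: perm_basis_vec_simps perm_basis_dual_mult_block_vec flip: block_vec_unit(2))
next
  case (4 j)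
  then show ?thesis using assms
    by (simp add: perm_basis_vec_simps perm_basis_dual_mult_block_vec flip: block_vec_unit(3)
        del: One_nat_def add_Suc_right)
qed

lemma perm_basis_mat_invertible:
  assumes "n \<le> m"
  shows "invertible_mat (perm_basis_mat m n)"
proof -
  have "perm_basis_dual_mat m n * perm_basis_mat m n = 1\<^sub>m (m + 2 * n)"
  proof (rule mat_col_eqI)
    fix c assume "c < dim_col (1\<^sub>m (m + 2 * n) :: real mat)"
    then have c: "c < m + 2 * n" by simp
    have "col (perm_basis_dual_mat m n * perm_basis_mat m n) c
        = perm_basis_dual_mat m n *\<^sub>v perm_basis_vec m n c"
      using col_mult2[OF perm_basis_mat_carrier(2,1) c]
      by (simp add: col_perm_basis_mat c)
    also have "\<dots> = col (1\<^sub>m (m + 2 * n)) c"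
      using perm_basis_dual_mult_perm_basis_vec[OF assms c] c by simp
    finally show "col (perm_basis_dual_mat m n * perm_basis_mat m n) c = col (1\<^sub>m (m + 2 * n)) c" .
  qed simp_all
  then show ?thesis
    using invertible_mat_iff_left_inverse[OF perm_basis_mat_carrier(1)] perm_basis_mat_carrier(2)
    by blast
qed

lemma std_rep_basis_up_to_sign:
  assumes "n \<le> m"
  shows "\<exists>bs. is_basis_list (m + 2 * n) bs \<and> invariant_up_to_sign (std_rep m n) bs"
proof (intro exI conjI)
  show "is_basis_list (m + 2 * n) (cols (perm_basis_mat m n))"
    unfolding is_basis_list_def using perm_basis_mat_invertible[OF assms] by auto
  show "invariant_up_to_sign (std_rep m n) (cols (perm_basis_mat m n))"
    using std_rep_permutes_perm_basis[OF assms]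
    by (subst invariant_up_to_sign_iff[OF std_rep_carrier]) (force simp: cols_perm_basis_mat)+
qed

theorem proposition2p21:
  fixes A :: "real mat" and d m n :: nat
  assumes "A \<in> carrier_mat d d"
    and "A ^\<^sub>m 3 = 1\<^sub>m d"
    and "similar_mat A (std_rep m n)"
  shows "(\<exists>bs. is_basis_list d bs \<and> invariant_up_to_sign A bs) \<longleftrightarrow> m \<ge> n"
proof -
  from similar_matD[OF assms(3)] assms(1) have d: "d = m + 2 * n"
    by (metis carrier_matD(1) insert_subset std_rep_dim(1))
  have trace: "trace A = real m - real n"
    using similar_mat_trace[OF assms(3)] trace_std_rep by simp
  show ?thesis
  proof
    assume "\<exists>bs. is_basis_list d bs \<and> invariant_up_to_sign A bs"
    then have "trace A \<ge> 0"
      using trace_nonneg_if_invariant_up_to_sign[OF assms(1,2)] by auto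
    then show "m \<ge> n" using trace by simp
  next
    assume "m \<ge> n"
    then obtain bs where "is_basis_list d bs" "invariant_up_to_sign (std_rep m n) bs"
      using std_rep_basis_up_to_sign d by blast
    then show "\<exists>bs. is_basis_list d bs \<and> invariant_up_to_sign A bs"
      using similar_mat_basis_up_to_sign[OF assms(3)] d by simp
  qed
qed
end
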